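(* Let $\mathfrak n$ be a 2-step nilpotent real Lie algebra with center $\mathfrak z$, and let $\omega$ be a closed 2-form on $\mathfrak n$ with $\ker(\omega)\cap\mathfrak z=\{0\}$, where $\ker(\omega)=\{W\in\mathfrak n:\omega(W,V)=0\ \forall V\in\mathfrak n\}$. Then $\ker(\omega)$ is an abelian subalgebra of $\mathfrak n$. As a consequence: if $\langle\cdot,\cdot\rangle$ is an inner product on $\mathfrak n$, $\mathfrak v=\mathfrak z^\perp$, and $F:\mathfrak n\to\mathfrak n$ is a skew-symmetric map with $F(\mathfrak v)\subseteq\mathfrak z$, $F(\mathfrak z)\subseteq\mathfrak v$, such that $\omega(X,Y)=\langle F(X),Y\rangle$ is closed and $F(\mathfrak v)=\mathfrak z$, then $\ker(F|_{\mathfrak v})$ is an abelian subalgebra of $\mathfrak n$.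
   Context: A real Lie algebra is 2-step nilpotent if $[[U,V],W]=0$ for all $U,V,W$. A 2-form $\omega$ on $\mathfrak n$ is closed iff $\omega([U,V],W)+\omega([V,W],U)+\omega([W,U],V)=0$ for all $U,V,W\in\mathfrak n$. *)

theory Defs
  imports "HOL-Analysis.Analysis"
begin

definition lie_algebra :: "('a::real_vector \<Rightarrow> 'a \<Rightarrow> 'a) \<Rightarrow> bool" where
  "lie_algebra br \<longleftrightarrow> bilinear br \<and> (\<forall>x. br x x = 0) \<and>
     (\<forall>x y z. br x (br y z) + br y (br z x) + br z (br x y) = 0)"

definition two_step_nilpotent :: "('a::real_vector \<Rightarrow> 'a \<Rightarrow> 'a) \<Rightarrow> bool" where
  "two_step_nilpotent br \<longleftrightarrow> lie_algebra br \<and> (\<forall>U V W. br (br U V) W = 0)"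

definition lie_center :: "('a::real_vector \<Rightarrow> 'a \<Rightarrow> 'a) \<Rightarrow> 'a set" where
  "lie_center br = {Z. \<forall>V. br Z V = 0}"

definition two_form :: "('a::real_vector \<Rightarrow> 'a \<Rightarrow> real) \<Rightarrow> bool" where
  "two_form \<omega> \<longleftrightarrow> bilinear \<omega> \<and> (\<forall>x. \<omega> x x = 0)"

definition closed_form :: "('a::real_vector \<Rightarrow> 'a \<Rightarrow> 'a) \<Rightarrow> ('a \<Rightarrow> 'a \<Rightarrow> real) \<Rightarrow> bool" where
  "closed_form br \<omega> \<longleftrightarrow>
     (\<forall>U V W. \<omega> (br U V) W + \<omega> (br V W) U + \<omega> (br W U) V = 0)"

definition form_kernel :: "('a \<Rightarrow> 'a \<Rightarrow> real) \<Rightarrow> 'a set" where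
  "form_kernel \<omega> = {W. \<forall>V. \<omega> W V = 0}"

definition lie_subalgebra :: "('a::real_vector \<Rightarrow> 'a \<Rightarrow> 'a) \<Rightarrow> 'a set \<Rightarrow> bool" where
  "lie_subalgebra br S \<longleftrightarrow> subspace S \<and> (\<forall>x\<in>S. \<forall>y\<in>S. br x y \<in> S)"

definition abelian_subalgebra :: "('a::real_vector \<Rightarrow> 'a \<Rightarrow> 'a) \<Rightarrow> 'a set \<Rightarrow> bool" where
  "abelian_subalgebra br S \<longleftrightarrow> lie_subalgebra br S \<and> (\<forall>x\<in>S. \<forall>y\<in>S. br x y = 0)"

definition skew_symmetric_map :: "('a::real_inner \<Rightarrow> 'a) \<Rightarrow> bool" where
  "skew_symmetric_map F \<longleftrightarrow> linear F \<and> (\<forall>x y. inner (F x) y = - inner x (F y))"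

definition orth_compl :: "'a::real_inner set \<Rightarrow> 'a set" where
  "orth_compl S = {x. \<forall>y\<in>S. inner x y = 0}"

end

theory Submission
  imports Defs
begin

text \<open>For a closed 2-form \<open>\<omega>\<close> and \<open>U, V \<in> ker \<omega>\<close>, the closedness identity
  for \<open>U, V, W\<close> has two terms vanishing because \<open>U\<close> resp. \<open>V\<close> is in the kernel, so
  \<open>\<omega>([U,V],W) = 0\<close> for all \<open>W\<close>: the kernel is a subalgebra. In a 2-step nilpotent
  algebra \<open>[U,V]\<close> is central, hence lies in \<open>ker \<omega> \<inter> \<zz> = 0\<close>.
  For \<open>\<omega>(X,Y) = \<langle>F X, Y\<rangle>\<close> the kernel of \<open>\<omega>\<close> is \<open>ker F\<close>, and skew-symmetry makes
  \<open>ker F\<close> orthogonal to the range of \<open>F\<close>, which contains \<open>\<zz> = F(\<vv>)\<close>.\<close>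

lemma two_form_antisym:
  assumes "two_form \<omega>"
  shows "\<omega> x y = - \<omega> y x"
proof -
  have bil: "bilinear \<omega>" and alt: "\<And>x. \<omega> x x = 0"
    using assms by (auto simp: two_form_def)
  have "\<omega> (x + y) (x + y) = \<omega> x x + \<omega> x y + (\<omega> y x + \<omega> y y)"
    by (simp add: bilinear_ladd[OF bil] bilinear_radd[OF bil])
  then show ?thesis
    by (simp add: alt)
qed

lemma subspace_form_kernel:
  assumes "bilinear \<omega>"
  shows "subspace (form_kernel \<omega>)"
  using assms
  by (auto simp: subspace_def form_kernel_def bilinear_lzero bilinear_ladd bilinear_lmul)

lemma lie_subalgebra_form_kernel:
  assumes "two_form \<omega>" and "closed_form br \<omega>"
  shows "lie_subalgebra br (form_kernel \<omega>)"
  unfolding lie_subalgebra_def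
proof (intro conjI ballI)
  show "subspace (form_kernel \<omega>)"
    using assms(1) by (simp add: two_form_def subspace_form_kernel)
next
  fix U V assume U: "U \<in> form_kernel \<omega>" and V: "V \<in> form_kernel \<omega>"
  have "\<omega> (br U V) W = 0" for W
  proof -
    have "\<omega> (br U V) W + \<omega> (br V W) U + \<omega> (br W U) V = 0"
      using assms(2) by (simp add: closed_form_def)
    moreover have "\<omega> (br V W) U = 0" "\<omega> (br W U) V = 0"
      using U V two_form_antisym[OF assms(1), of "br V W" U] two_form_antisym[OF assms(1), of "br W U" V]
      by (simp_all add: form_kernel_def)
    ultimately show ?thesis by simp
  qed
  then show "br U V \<in> form_kernel \<omega>"
    by (simp add: form_kernel_def)
qed

lemma two_step_nilpotent_bracket_in_center:
  assumes "two_step_nilpotent br"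
  shows "br U V \<in> lie_center br"
  using assms by (simp add: two_step_nilpotent_def lie_center_def)

lemma abelian_form_kernel:
  assumes "two_step_nilpotent br" and "two_form \<omega>" and "closed_form br \<omega>"
    and "form_kernel \<omega> \<inter> lie_center br = {0}"
  shows "abelian_subalgebra br (form_kernel \<omega>)"
proof -
  have sub: "lie_subalgebra br (form_kernel \<omega>)"
    using assms(2,3) by (rule lie_subalgebra_form_kernel)
  then have "br U V \<in> form_kernel \<omega> \<inter> lie_center br"
    if "U \<in> form_kernel \<omega>" "V \<in> form_kernel \<omega>" for U V
    using that two_step_nilpotent_bracket_in_center[OF assms(1)]
    by (simp add: lie_subalgebra_def)
  then show ?thesis
    using sub assms(4) by (auto simp: abelian_subalgebra_def)
qed

lemma abelian_subalgebra_subset: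
  assumes "abelian_subalgebra br S" and "subspace T" and "T \<subseteq> S"
  shows "abelian_subalgebra br T"
proof -
  have "br x y = 0" if "x \<in> T" "y \<in> T" for x y
    using that assms(1,3) by (auto simp: abelian_subalgebra_def)
  then show ?thesis
    using assms(2) subspace_0[OF assms(2)] by (simp add: abelian_subalgebra_def lie_subalgebra_def)
qed

lemma zero_in_lie_center:
  assumes "lie_algebra br"
  shows "0 \<in> lie_center br"
  using assms by (simp add: lie_algebra_def lie_center_def bilinear_lzero)

lemma subspace_orth_compl: "subspace (orth_compl S)"
  by (auto simp: subspace_def orth_compl_def inner_add_left)

lemma two_form_skew_symmetric_map:
  assumes "skew_symmetric_map F"
  shows "two_form (\<lambda>X Y. inner (F X) Y)"
proof -
  have lin: "linear F" and skew: "\<And>x y. inner (F x) y = - inner x (F y)"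
    using assms by (auto simp: skew_symmetric_map_def)
  have "bilinear (\<lambda>X Y. inner (F X) Y)"
    using lin by (auto intro!: linearI simp: bilinear_def linear_add linear_scale
        inner_add_left inner_add_right)
  moreover have "inner (F x) x = 0" for x
    using skew[of x x] by (simp add: inner_commute)
  ultimately show ?thesis
    by (simp add: two_form_def)
qed

lemma form_kernel_inner: "form_kernel (\<lambda>X Y. inner (F X) Y) = {X. F X = 0}"
  by (auto simp: form_kernel_def dest: spec[where x = "F _"])

lemma skew_symmetric_map_kernel_Int:
  assumes "skew_symmetric_map F" and "S \<subseteq> range F" and "0 \<in> S"
  shows "{X. F X = 0} \<inter> S = {0}"
proof -
  have "Z = 0" if "F Z = 0" and "Z \<in> S" for Z
  proof -
    obtain X where "Z = F X"
      using \<open>Z \<in> S\<close> assms(2) by blast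
    then have "inner Z Z = - inner X (F Z)"
      using assms(1) by (simp add: skew_symmetric_map_def)
    then show ?thesis
      using \<open>F Z = 0\<close> by simp
  qed
  moreover have "F 0 = 0"
    using assms(1) by (simp add: skew_symmetric_map_def linear_0)
  ultimately show ?thesis
    using assms(3) by auto
qed

theorem mainTheorem4:
  fixes br :: "'a::euclidean_space \<Rightarrow> 'a \<Rightarrow> 'a"
  assumes nil: "two_step_nilpotent br"
  shows "(\<forall>\<omega>. two_form \<omega> \<and> closed_form br \<omega> \<and> form_kernel \<omega> \<inter> lie_center br = {0}
            \<longrightarrow> abelian_subalgebra br (form_kernel \<omega>))
       \<and> (\<forall>F. skew_symmetric_map F
            \<and> F ` orth_compl (lie_center br) \<subseteq> lie_center br
            \<and> F ` lie_center br \<subseteq> orth_compl (lie_center br)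
            \<and> closed_form br (\<lambda>X Y. inner (F X) Y)
            \<and> F ` orth_compl (lie_center br) = lie_center br
            \<longrightarrow> abelian_subalgebra br {X \<in> orth_compl (lie_center br). F X = 0})"
proof (intro conjI allI impI)
  fix \<omega> :: "'a \<Rightarrow> 'a \<Rightarrow> real"
  assume "two_form \<omega> \<and> closed_form br \<omega> \<and> form_kernel \<omega> \<inter> lie_center br = {0}"
  then show "abelian_subalgebra br (form_kernel \<omega>)"
    using abelian_form_kernel[OF nil] by blast
next
  fix F :: "'a \<Rightarrow> 'a"
  assume "skew_symmetric_map F \<and> F ` orth_compl (lie_center br) \<subseteq> lie_center br
    \<and> F ` lie_center br \<subseteq> orth_compl (lie_center br)
    \<and> closed_form br (\<lambda>X Y. inner (F X) Y) \<and> F ` orth_compl (lie_center br) = lie_center br"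
  then have skew: "skew_symmetric_map F" and closed: "closed_form br (\<lambda>X Y. inner (F X) Y)"
    and onto: "lie_center br \<subseteq> range F"
    by (blast, blast, metis image_subset_iff rangeI)
  have "0 \<in> lie_center br"
    using nil zero_in_lie_center[of br] by (simp add: two_step_nilpotent_def)
  then have ker: "abelian_subalgebra br {X. F X = 0}"
    using abelian_form_kernel[OF nil two_form_skew_symmetric_map[OF skew] closed]
      skew_symmetric_map_kernel_Int[OF skew onto]
    by (simp add: form_kernel_inner)
  then have "subspace (orth_compl (lie_center br) \<inter> {X. F X = 0})"
    by (intro subspace_inter subspace_orth_compl) (simp add: abelian_subalgebra_def lie_subalgebra_def)
  then have "subspace {X \<in> orth_compl (lie_center br). F X = 0}"
    by (simp add: Int_def)
  with ker show "abelian_subalgebra br {X \<in> orth_compl (lie_center br). F X = 0}"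
    by (rule abelian_subalgebra_subset) auto
qed

end
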